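(* Let $\lambda\in(0,\tfrac12)$ and let $G$ be a finite simple connected graph with $n$ vertices. Then $$mc^{e}_{\lambda}(G)\le (n-1)\lambda,$$ and equality holds for the complete graph $K_n$ (at any of its vertices).
   Context: $d(u,v)$ denotes graph distance and $[u]$ the set of neighbours of $u$. For vertices $k,l$, $s^{kl}$ is the number of shortest $k$–$l$ paths and, for an edge $uv$, $s^{kl}_{uv}$ is the number of those passing through the edge $uv$. The exponential edge betweenness of an edge $uv$ is $b^{e}_{\lambda}(uv)=\sum_{\{k,l\}}\frac{s^{kl}_{uv}}{s^{kl}}\lambda^{d(k,l)}$ over all unordered pairs $\{k,l\}$ of distinct vertices; the exponential betweenness centrality of a vertex $u$ is $c^{e}_{\lambda}(u)=\sum_{v\in[u]}b^{e}_{\lambda}(uv)$; and $mc^{e}_{\lambda}(G)=\min\{c^{e}_{\lambda}(u):u\in V(G)\}$. *)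

theory Defs
  imports Complex_Main
begin

definition simple_graph :: "'a set \<Rightarrow> ('a \<Rightarrow> 'a \<Rightarrow> bool) \<Rightarrow> bool" where
  "simple_graph V E \<longleftrightarrow> finite V \<and> (\<forall>u v. E u v \<longrightarrow> u \<in> V \<and> v \<in> V)
     \<and> (\<forall>u v. E u v \<longrightarrow> E v u) \<and> (\<forall>u. \<not> E u u)"

definition walk :: "'a set \<Rightarrow> ('a \<Rightarrow> 'a \<Rightarrow> bool) \<Rightarrow> 'a list \<Rightarrow> bool" where
  "walk V E xs \<longleftrightarrow> xs \<noteq> [] \<and> set xs \<subseteq> V \<and>
     (\<forall>i. Suc i < length xs \<longrightarrow> E (xs ! i) (xs ! Suc i))"

definition connected_graph :: "'a set \<Rightarrow> ('a \<Rightarrow> 'a \<Rightarrow> bool) \<Rightarrow> bool" where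
  "connected_graph V E \<longleftrightarrow> V \<noteq> {} \<and>
     (\<forall>k\<in>V. \<forall>l\<in>V. \<exists>xs. walk V E xs \<and> hd xs = k \<and> last xs = l)"

definition gdist :: "'a set \<Rightarrow> ('a \<Rightarrow> 'a \<Rightarrow> bool) \<Rightarrow> 'a \<Rightarrow> 'a \<Rightarrow> nat" where
  "gdist V E k l = (LEAST n. \<exists>xs. walk V E xs \<and> hd xs = k \<and> last xs = l \<and> length xs = Suc n)"

definition shortest_paths :: "'a set \<Rightarrow> ('a \<Rightarrow> 'a \<Rightarrow> bool) \<Rightarrow> 'a \<Rightarrow> 'a \<Rightarrow> 'a list set" where
  "shortest_paths V E k l = {xs. walk V E xs \<and> hd xs = k \<and> last xs = l
       \<and> length xs = Suc (gdist V E k l)}"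

definition uses_edge :: "'a \<Rightarrow> 'a \<Rightarrow> 'a list \<Rightarrow> bool" where
  "uses_edge u v xs \<longleftrightarrow> (\<exists>i. Suc i < length xs \<and> {xs ! i, xs ! Suc i} = {u, v})"

definition num_sp :: "'a set \<Rightarrow> ('a \<Rightarrow> 'a \<Rightarrow> bool) \<Rightarrow> 'a \<Rightarrow> 'a \<Rightarrow> nat" where
  "num_sp V E k l = card (shortest_paths V E k l)"

definition num_sp_edge :: "'a set \<Rightarrow> ('a \<Rightarrow> 'a \<Rightarrow> bool) \<Rightarrow> 'a \<Rightarrow> 'a \<Rightarrow> 'a \<Rightarrow> 'a \<Rightarrow> nat" where
  "num_sp_edge V E k l u v = card {xs \<in> shortest_paths V E k l. uses_edge u v xs}"

text \<open>Exponential edge betweenness; the sum over unordered pairs {k,l} of distinct vertices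
  is written as half the (symmetric) sum over ordered pairs.\<close>
definition exp_edge_betweenness :: "'a set \<Rightarrow> ('a \<Rightarrow> 'a \<Rightarrow> bool) \<Rightarrow> real \<Rightarrow> 'a \<Rightarrow> 'a \<Rightarrow> real" where
  "exp_edge_betweenness V E lam u v =
     (1/2) * (\<Sum>(k,l)\<in>{(k,l). k \<in> V \<and> l \<in> V \<and> k \<noteq> l}.
        real (num_sp_edge V E k l u v) / real (num_sp V E k l) * lam ^ gdist V E k l)"

definition exp_betweenness :: "'a set \<Rightarrow> ('a \<Rightarrow> 'a \<Rightarrow> bool) \<Rightarrow> real \<Rightarrow> 'a \<Rightarrow> real" where
  "exp_betweenness V E lam u = (\<Sum>v\<in>{v\<in>V. E u v}. exp_edge_betweenness V E lam u v)"

definition min_exp_betweenness :: "'a set \<Rightarrow> ('a \<Rightarrow> 'a \<Rightarrow> bool) \<Rightarrow> real \<Rightarrow> real" where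
  "min_exp_betweenness V E lam = Min (exp_betweenness V E lam ` V)"

end

theory Submission imports Defs begin

text \<open>Summing \<open>c\<^sup>e\<^sub>\<lambda>(u)\<close> over all vertices \<open>u\<close> counts every directed edge of every
  shortest \<open>k\<close>--\<open>l\<close> path. A path with \<open>d\<close> edges uses at most \<open>2d\<close> directed edges, so each
  ordered pair \<open>(k,l)\<close> contributes at most \<open>d \<lambda>\<^sup>d \<le> \<lambda>\<close> (as \<open>\<lambda> < 1/2\<close>), and the
  total is at most \<open>n(n-1)\<lambda>\<close>. The minimum is at most the average \<open>(n-1)\<lambda>\<close>. In \<open>K\<^sub>n\<close>
  the only shortest path through an edge \<open>uv\<close> is the edge itself, so every vertex attains
  this value.\<close>

lemma finite_shortest_paths: "finite V \<Longrightarrow> finite (shortest_paths V E k l)"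
proof -
  assume "finite V"
  moreover have "shortest_paths V E k l \<subseteq> {xs. set xs \<subseteq> V \<and> length xs = Suc (gdist V E k l)}"
    by (auto simp: shortest_paths_def walk_def)
  ultimately show ?thesis
    using finite_lists_length_eq finite_subset by blast
qed

lemma card_uses_edge_le: "card {x \<in> A. uses_edge (fst x) (snd x) p} \<le> 2 * (length p - 1)"
proof -
  let ?d = "length p - 1"
  let ?step = "\<lambda>(i, b). if b then (p ! i, p ! Suc i) else (p ! Suc i, p ! i)"
  have "{x \<in> A. uses_edge (fst x) (snd x) p} \<subseteq> ?step ` ({..<?d} \<times> UNIV)"
  proof
    fix x assume "x \<in> {x \<in> A. uses_edge (fst x) (snd x) p}"
    then obtain i where i: "Suc i < length p" "{p ! i, p ! Suc i} = {fst x, snd x}"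
      by (auto simp: uses_edge_def)
    then have "x = ?step (i, True) \<or> x = ?step (i, False)"
      by (cases x) (auto simp: doubleton_eq_iff)
    moreover have "i < ?d" using i by simp
    ultimately show "x \<in> ?step ` ({..<?d} \<times> UNIV)" by blast
  qed
  then have "card {x \<in> A. uses_edge (fst x) (snd x) p} \<le> card (?step ` ({..<?d} \<times> UNIV))"
    by (intro card_mono) auto
  also have "\<dots> \<le> card ({..<?d} \<times> (UNIV :: bool set))" by (rule card_image_le) auto
  also have "\<dots> = 2 * ?d" by (simp add: card_cartesian_product)
  finally show ?thesis .
qed

lemma of_nat_mult_power_le:
  fixes lam :: real
  assumes "0 \<le> lam" "lam \<le> 1/2"
  shows "real d * lam ^ d \<le> lam"
proof (cases d)
  case 0
  then show ?thesis using assms by simp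
next
  case (Suc m)
  have "real (Suc m) \<le> 2 ^ m" by (induction m) auto
  moreover have "lam ^ m \<le> (1/2) ^ m" using assms by (intro power_mono)
  ultimately have "real (Suc m) * lam ^ m \<le> 2 ^ m * (1/2) ^ m"
    using assms by (intro mult_mono) auto
  also have "\<dots> = 1" by (simp add: power_mult_distrib[symmetric])
  finally have "real (Suc m) * lam ^ m * lam \<le> 1 * lam"
    using assms(1) by (rule mult_right_mono)
  then show ?thesis using Suc by (simp add: algebra_simps)
qed

lemma sum_num_sp_edge_le:
  assumes "finite V"
  shows "(\<Sum>u\<in>V. \<Sum>v\<in>{v\<in>V. E u v}. num_sp_edge V E k l u v)
           \<le> 2 * gdist V E k l * num_sp V E k l"
proof -
  let ?S = "shortest_paths V E k l"
  let ?A = "Sigma V (\<lambda>u. {v\<in>V. E u v})"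
  let ?uses = "\<lambda>x p. if uses_edge (fst x) (snd x) p then 1 else 0 :: nat"
  have finite_S: "finite ?S" using finite_shortest_paths[OF assms] .
  have finite_A: "finite ?A" using assms by auto
  have "(\<Sum>u\<in>V. \<Sum>v\<in>{v\<in>V. E u v}. num_sp_edge V E k l u v)
      = (\<Sum>x\<in>?A. card {p \<in> ?S. uses_edge (fst x) (snd x) p})"
    using assms by (subst sum.Sigma) (auto simp: case_prod_beta num_sp_edge_def)
  also have "\<dots> = (\<Sum>x\<in>?A. \<Sum>p\<in>?S. ?uses x p)"
    using finite_S by (simp add: sum.inter_filter[symmetric])
  also have "\<dots> = (\<Sum>p\<in>?S. \<Sum>x\<in>?A. ?uses x p)"
    by (rule sum.swap)
  also have "\<dots> = (\<Sum>p\<in>?S. card {x \<in> ?A. uses_edge (fst x) (snd x) p})"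
    using finite_A by (simp add: sum.inter_filter[symmetric])
  also have "\<dots> \<le> (\<Sum>p\<in>?S. 2 * gdist V E k l)"
  proof (rule sum_mono)
    fix p assume "p \<in> ?S"
    then have "length p - 1 = gdist V E k l" by (simp add: shortest_paths_def)
    then show "card {x \<in> ?A. uses_edge (fst x) (snd x) p} \<le> 2 * gdist V E k l"
      using card_uses_edge_le[of ?A p] by simp
  qed
  also have "\<dots> = 2 * gdist V E k l * num_sp V E k l" by (simp add: num_sp_def)
  finally show ?thesis .
qed

lemma sum_pair_contribution_le:
  assumes "finite V" "0 \<le> lam" "lam \<le> 1/2"
  shows "(\<Sum>u\<in>V. \<Sum>v\<in>{v\<in>V. E u v}.
            real (num_sp_edge V E k l u v) / real (num_sp V E k l) * lam ^ gdist V E k l)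
         \<le> 2 * lam"
proof -
  let ?d = "gdist V E k l" and ?N = "num_sp V E k l"
  define T where "T = (\<Sum>u\<in>V. \<Sum>v\<in>{v\<in>V. E u v}. num_sp_edge V E k l u v)"
  have "(\<Sum>u\<in>V. \<Sum>v\<in>{v\<in>V. E u v}. real (num_sp_edge V E k l u v) / real ?N * lam ^ ?d)
      = real T / real ?N * lam ^ ?d"
    unfolding T_def by (simp add: sum_divide_distrib sum_distrib_right)
  also have "\<dots> \<le> 2 * lam"
  proof (cases "?N = 0")
    case True
    then show ?thesis using assms by simp
  next
    case False
    have "real T \<le> 2 * real ?d * real ?N"
      using sum_num_sp_edge_le[OF assms(1), of E k l] unfolding T_def
      by (metis of_nat_le_iff of_nat_mult of_nat_numeral)
    then have "real T / real ?N \<le> 2 * real ?d" using False by (simp add: divide_le_eq)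
    then have "real T / real ?N * lam ^ ?d \<le> 2 * real ?d * lam ^ ?d"
      by (rule mult_right_mono) (use assms(2) in simp)
    also have "\<dots> \<le> 2 * lam" using of_nat_mult_power_le[OF assms(2,3), of ?d] by (simp add: mult.assoc)
    finally show ?thesis .
  qed
  finally show ?thesis .
qed

lemma sum_exp_betweenness_le:
  assumes "finite V" "0 \<le> lam" "lam \<le> 1/2"
  shows "(\<Sum>u\<in>V. exp_betweenness V E lam u) \<le> real (card V) * (real (card V) - 1) * lam"
proof -
  let ?P = "{(k,l). k \<in> V \<and> l \<in> V \<and> k \<noteq> l}"
  let ?term = "\<lambda>k l u v. real (num_sp_edge V E k l u v) / real (num_sp V E k l) * lam ^ gdist V E k l"
  have P: "?P = Sigma V (\<lambda>k. V - {k})" by auto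
  have "(\<Sum>u\<in>V. exp_betweenness V E lam u)
      = (1/2) * (\<Sum>(k,l)\<in>?P. \<Sum>u\<in>V. \<Sum>v\<in>{v\<in>V. E u v}. ?term k l u v)"
    by (simp add: exp_betweenness_def exp_edge_betweenness_def sum_distrib_left case_prod_beta
        sum.swap[of _ "{v\<in>V. E _ v}"] sum.swap[of _ V])
  also have "\<dots> \<le> (1/2) * (\<Sum>(k,l)\<in>?P. 2 * lam)"
    using sum_pair_contribution_le[OF assms]
    by (intro mult_left_mono sum_mono) (auto simp del: times_divide_eq_left times_divide_eq_right)
  also have "\<dots> = real (card ?P) * lam" by simp
  also have "\<dots> = real (card V) * (real (card V) - 1) * lam"
    unfolding P using assms(1) by (cases "card V") (auto simp: card_SigmaI algebra_simps)
  finally show ?thesis .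
qed

lemma Min_le_average:
  fixes f :: "'a \<Rightarrow> real"
  assumes "finite A" "A \<noteq> {}" "sum f A \<le> real (card A) * c"
  shows "Min (f ` A) \<le> c"
proof -
  have "real (card A) * Min (f ` A) \<le> sum f A"
    using assms(1) by (intro sum_bounded_below) simp
  with assms have "real (card A) * Min (f ` A) \<le> real (card A) * c" by linarith
  moreover have "0 < real (card A)" using assms(1,2) by (simp add: card_gt_0_iff)
  ultimately show ?thesis by simp
qed

context
  fixes V :: "'a set" and E :: "'a \<Rightarrow> 'a \<Rightarrow> bool"
  assumes complete: "\<forall>u v. E u v \<longleftrightarrow> u \<in> V \<and> v \<in> V \<and> u \<noteq> v"
begin

lemma complete_walk_edge: "k \<in> V \<Longrightarrow> l \<in> V \<Longrightarrow> k \<noteq> l \<Longrightarrow> walk V E [k, l]"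
  using complete by (auto simp: walk_def less_Suc_eq)

lemma complete_gdist:
  assumes "k \<in> V" "l \<in> V" "k \<noteq> l"
  shows "gdist V E k l = 1"
  unfolding gdist_def
proof (rule Least_equality)
  show "\<exists>xs. walk V E xs \<and> hd xs = k \<and> last xs = l \<and> length xs = Suc 1"
    using complete_walk_edge[OF assms] by (intro exI[of _ "[k, l]"]) auto
next
  fix n assume "\<exists>xs. walk V E xs \<and> hd xs = k \<and> last xs = l \<and> length xs = Suc n"
  then obtain xs where "hd xs = k" "last xs = l" "length xs = Suc n" by blast
  then show "1 \<le> n" using assms(3) by (cases xs) (auto split: if_splits simp: Suc_le_eq)
qed

lemma complete_shortest_paths:
  assumes "k \<in> V" "l \<in> V" "k \<noteq> l"
  shows "shortest_paths V E k l = {[k, l]}"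
proof -
  have "xs = [k, l]" if "hd xs = k" "last xs = l" "length xs = 2" for xs :: "'a list"
    using that by (cases xs; cases "tl xs") auto
  then show ?thesis
    using complete_walk_edge[OF assms] complete_gdist[OF assms]
    unfolding shortest_paths_def by (auto simp: numeral_2_eq_2)
qed

lemma complete_exp_edge_betweenness:
  assumes "finite V" "u \<in> V" "v \<in> V" "u \<noteq> v"
  shows "exp_edge_betweenness V E lam u v = lam"
proof -
  let ?P = "{(k,l). k \<in> V \<and> l \<in> V \<and> k \<noteq> l}"
  have finite_P: "finite ?P" by (rule finite_subset[of _ "V \<times> V"]) (use assms(1) in auto)
  have pair_term: "real (num_sp_edge V E k l u v) / real (num_sp V E k l) * lam ^ gdist V E k l
      = (if (k,l) \<in> {(u,v), (v,u)} then lam else 0)" if "(k,l) \<in> ?P" for k l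
  proof -
    from that have kl: "k \<in> V" "l \<in> V" "k \<noteq> l" by auto
    have "uses_edge u v [k, l] \<longleftrightarrow> (k,l) \<in> {(u,v), (v,u)}"
      by (auto simp: uses_edge_def doubleton_eq_iff less_Suc_eq)
    then show ?thesis
      using complete_shortest_paths[OF kl] complete_gdist[OF kl]
      by (auto simp: num_sp_def num_sp_edge_def Collect_conv_if)
  qed
  have "exp_edge_betweenness V E lam u v = (1/2) * (\<Sum>x\<in>?P. if x \<in> {(u,v), (v,u)} then lam else 0)"
    unfolding exp_edge_betweenness_def using pair_term by (auto intro!: sum.cong)
  also have "\<dots> = (1/2) * (\<Sum>x\<in>?P \<inter> {(u,v), (v,u)}. lam)"
    using sum.inter_restrict[OF finite_P, of "\<lambda>_. lam" "{(u,v), (v,u)}"] by (simp add: if_distrib)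
  also have "?P \<inter> {(u,v), (v,u)} = {(u,v), (v,u)}" using assms by auto
  finally show ?thesis using assms(4) by simp
qed

lemma complete_exp_betweenness:
  assumes "finite V" "u \<in> V"
  shows "exp_betweenness V E lam u = (real (card V) - 1) * lam"
proof -
  have "{v \<in> V. E u v} = V - {u}" using complete assms(2) by auto
  then have "exp_betweenness V E lam u = (\<Sum>v\<in>V - {u}. lam)"
    unfolding exp_betweenness_def using complete_exp_edge_betweenness assms
    by (intro sum.cong) auto
  also have "\<dots> = (real (card V) - 1) * lam"
  proof -
    have "Suc 0 \<le> card V" using assms by (auto simp: Suc_le_eq card_gt_0_iff)
    then show ?thesis using assms by (simp add: card_Diff_singleton of_nat_diff)
  qed
  finally show ?thesis .
qed

end

theorem theorem7:
  fixes V :: "'a set" and E :: "'a \<Rightarrow> 'a \<Rightarrow> bool" and lam :: real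
  assumes "0 < lam" and "lam < 1/2"
    and "simple_graph V E" and "connected_graph V E"
  shows "min_exp_betweenness V E lam \<le> (real (card V) - 1) * lam
    \<and> ((\<forall>u v. E u v \<longleftrightarrow> u \<in> V \<and> v \<in> V \<and> u \<noteq> v) \<longrightarrow>
         min_exp_betweenness V E lam = (real (card V) - 1) * lam
         \<and> (\<forall>u\<in>V. exp_betweenness V E lam u = (real (card V) - 1) * lam))"
proof -
  have finite: "finite V" using assms(3) by (simp add: simple_graph_def)
  have nonempty: "V \<noteq> {}" using assms(4) by (simp add: connected_graph_def)
  have "min_exp_betweenness V E lam \<le> (real (card V) - 1) * lam"
    unfolding min_exp_betweenness_def
    using Min_le_average[OF finite nonempty] sum_exp_betweenness_le[OF finite] assms(1,2)
    by (simp add: mult.assoc)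
  moreover have "min_exp_betweenness V E lam = (real (card V) - 1) * lam
      \<and> (\<forall>u\<in>V. exp_betweenness V E lam u = (real (card V) - 1) * lam)"
    if complete: "\<forall>u v. E u v \<longleftrightarrow> u \<in> V \<and> v \<in> V \<and> u \<noteq> v"
  proof -
    have "exp_betweenness V E lam ` V = {(real (card V) - 1) * lam}"
      using complete_exp_betweenness[OF complete finite] nonempty by auto
    then show ?thesis
      using complete_exp_betweenness[OF complete finite] by (simp add: min_exp_betweenness_def)
  qed
  ultimately show ?thesis by blast
qed

end
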